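(* Let $r$ be an odd prime and $\mu_i=(-1)^iA_r^{i(i+2)}$. If $0\le i<j\le\frac{r-3}{2}$, then $\mu_i^2-\mu_j^2\sim\mu_i-\mu_j\sim 1-A_r^2$.
   Context: $\alpha_r=e^{2\pi i/(4r)}$, $A_r=\alpha_r^2$; $\mathcal{O}_r=\mathbb{Z}[A_r]$ if $r\equiv-1\pmod 4$ and $\mathcal{O}_r=\mathbb{Z}[\alpha_r]$ if $r\equiv 1\pmod 4$. $a\sim b$ means $a/b$ is a unit of $\mathcal{O}_r$. *)

theory Defs
  imports Complex_Main "HOL-Computational_Algebra.Polynomial"
begin

definition alpha_r :: "nat \<Rightarrow> complex" where
  "alpha_r r = cis (2 * pi / (4 * real r))"

definition A_r :: "nat \<Rightarrow> complex" where
  "A_r r = (alpha_r r)^2"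

definition int_adjoin :: "complex \<Rightarrow> complex set" where
  "int_adjoin z = {poly (map_poly of_int p) z | p :: int poly. True}"

definition O_r :: "nat \<Rightarrow> complex set" where
  "O_r r = (if r mod 4 = 3 then int_adjoin (A_r r) else int_adjoin (alpha_r r))"

text \<open>a ~ b : a/b is a unit of O_r, i.e. b is nonzero, a/b is nonzero, a/b and b/a lie in O_r.\<close>
definition assoc_r :: "nat \<Rightarrow> complex \<Rightarrow> complex \<Rightarrow> bool" where
  "assoc_r r a b \<longleftrightarrow> b \<noteq> 0 \<and> a \<noteq> 0 \<and> a / b \<in> O_r r \<and> b / a \<in> O_r r"

definition mu_r :: "nat \<Rightarrow> nat \<Rightarrow> complex" where
  "mu_r r i = (-1)^i * (A_r r)^(i * (i + 2))"

end

theory Submission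
  imports Defs "HOL-Number_Theory.Number_Theory"
begin

text \<open>Put \<open>\<zeta> = -A\<^sub>r\<close>. For odd \<open>r\<close> it is a primitive \<open>r\<close>-th root of unity, and
  \<open>\<mu>\<^sub>i = \<zeta>\<^bsup>i(i+2)\<^esup>\<close> because \<open>i(i+2) \<equiv> i (mod 2)\<close>. Hence \<open>\<mu>\<^sub>i - \<mu>\<^sub>j = \<zeta>\<^sup>a(1 - \<zeta>\<^sup>d)\<close>
  and \<open>\<mu>\<^sub>i\<^sup>2 - \<mu>\<^sub>j\<^sup>2 = \<zeta>\<^bsup>2a\<^esup>(1 - \<zeta>\<^bsup>2d\<^esup>)\<close> with \<open>a = i(i+2)\<close>, \<open>d = (j-i)(j+i+2)\<close>; both factors of \<open>d\<close>
  lie strictly between \<open>0\<close> and \<open>r\<close>. For exponents \<open>k, m\<close> prime to \<open>r\<close>, Fermat's little theorem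
  gives \<open>c\<close> with \<open>k \<equiv> c m (mod r)\<close>, so \<open>(1 - \<zeta>\<^sup>k)/(1 - \<zeta>\<^sup>m) = 1 + \<zeta>\<^sup>m + \<dots> + \<zeta>\<^bsup>(c-1)m\<^esup>\<close>
  lies in \<open>\<int>[\<zeta>] \<subseteq> \<O>\<^sub>r\<close>. Exchanging \<open>k\<close> and \<open>m\<close>, and since powers of \<open>\<zeta>\<close> are units,
  the three numbers are associates.\<close>

lemma poly_map_poly_of_int_add:
  fixes z :: "'a::comm_ring_1"
  shows "poly (map_poly of_int (p + q)) z = poly (map_poly of_int p) z + poly (map_poly of_int q) z"
proof -
  have "map_poly of_int (p + q) = map_poly (of_int :: int \<Rightarrow> 'a) p + map_poly of_int q"
    by (simp add: poly_eq_iff coeff_map_poly)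
  then show ?thesis by simp
qed

lemma poly_map_poly_of_int_mult:
  fixes z :: "'a::comm_ring_1"
  shows "poly (map_poly of_int (p * q)) z = poly (map_poly of_int p) z * poly (map_poly of_int q) z"
proof -
  have "map_poly of_int (p * q) = map_poly (of_int :: int \<Rightarrow> 'a) p * map_poly of_int q"
    by (simp add: poly_eq_iff coeff_mult coeff_map_poly)
  then show ?thesis by simp
qed

lemma int_adjoin_poly: "poly (map_poly of_int p) z \<in> int_adjoin z"
  unfolding int_adjoin_def by blast

lemma int_adjoinE:
  assumes "x \<in> int_adjoin z"
  obtains p where "x = poly (map_poly of_int p) z"
  using assms unfolding int_adjoin_def by blast

lemma int_adjoin_add: "x \<in> int_adjoin z \<Longrightarrow> y \<in> int_adjoin z \<Longrightarrow> x + y \<in> int_adjoin z"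
  by (elim int_adjoinE) (metis poly_map_poly_of_int_add int_adjoin_poly)

lemma int_adjoin_mult: "x \<in> int_adjoin z \<Longrightarrow> y \<in> int_adjoin z \<Longrightarrow> x * y \<in> int_adjoin z"
  by (elim int_adjoinE) (metis poly_map_poly_of_int_mult int_adjoin_poly)

lemma int_adjoin_of_int: "of_int c \<in> int_adjoin z"
  using int_adjoin_poly[of "[:c:]" z] by (simp add: map_poly_pCons)

lemma int_adjoin_self: "z \<in> int_adjoin z"
  using int_adjoin_poly[of "[:0, 1:]" z] by (simp add: map_poly_pCons)

lemma int_adjoin_power: "x \<in> int_adjoin z \<Longrightarrow> x ^ n \<in> int_adjoin z"
  by (induction n) (auto intro: int_adjoin_mult int_adjoin_of_int[of 1, simplified])

lemma int_adjoin_sum: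
  "(\<And>t. t \<in> T \<Longrightarrow> f t \<in> int_adjoin z) \<Longrightarrow> (\<Sum>t\<in>T. f t) \<in> int_adjoin z"
  by (induction T rule: infinite_finite_induct)
     (auto intro: int_adjoin_add int_adjoin_of_int[of 0, simplified])

lemma int_adjoin_subset:
  assumes "w \<in> int_adjoin z"
  shows "int_adjoin w \<subseteq> int_adjoin z"
proof
  fix x assume "x \<in> int_adjoin w"
  then obtain p where x: "x = poly (map_poly of_int p) w"
    by (rule int_adjoinE)
  have "poly (map_poly of_int p) w \<in> int_adjoin z"
  proof (induction p)
    case 0
    show ?case using int_adjoin_of_int[of 0] by simp
  next
    case (pCons a p)
    then show ?case
      by (simp add: map_poly_pCons int_adjoin_add int_adjoin_mult int_adjoin_of_int assms)
  qed
  then show "x \<in> int_adjoin z" using x by simp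
qed

lemma int_adjoin_neg_A_r_subset_O_r: "int_adjoin (- A_r r) \<subseteq> O_r r"
proof -
  have "- A_r r \<in> int_adjoin (A_r r)"
    using int_adjoin_mult[OF int_adjoin_of_int[of "-1"] int_adjoin_self] by simp
  moreover have "- A_r r \<in> int_adjoin (alpha_r r)"
    using int_adjoin_mult[OF int_adjoin_of_int[of "-1"] int_adjoin_power[OF int_adjoin_self, of _ 2]]
    by (simp add: A_r_def)
  ultimately show ?thesis
    unfolding O_r_def by (simp add: int_adjoin_subset)
qed

lemma power_mod_eq_if_power_eq_one:
  fixes \<zeta> :: "'a::monoid_mult"
  assumes "\<zeta> ^ r = 1"
  shows "\<zeta> ^ n = \<zeta> ^ (n mod r)"
proof -
  have "\<zeta> ^ n = (\<zeta> ^ r) ^ (n div r) * \<zeta> ^ (n mod r)"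
    by (metis div_mult_mod_eq mult.commute power_add power_mult)
  then show ?thesis using assms by simp
qed

text \<open>The exponent \<open>m\<^bsup>r-2\<^esup> k\<close> is \<open>k/m\<close> modulo \<open>r\<close>, by Fermat's little theorem.\<close>

lemma prime_root_of_unity_power_eq_power_power:
  fixes \<zeta> :: "'a::comm_monoid_mult"
  assumes "prime r" "\<zeta> ^ r = 1" "\<not> r dvd m"
  shows "\<zeta> ^ k = (\<zeta> ^ m) ^ (m ^ (r - 2) * k)"
proof -
  have "[m ^ (r - 1) = 1] (mod r)"
    using fermat_theorem assms(1,3) by blast
  moreover have "r - 1 = Suc (r - 2)"
    using prime_ge_2_nat[OF assms(1)] by simp
  ultimately have "[m * (m ^ (r - 2) * k) = k] (mod r)"
    using cong_mult[of "m ^ (r - 1)" 1 r k k] by (simp add: mult.assoc)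
  then show ?thesis
    using power_mod_eq_if_power_eq_one[OF assms(2)]
    by (metis cong_def power_mult)
qed

lemma prime_root_of_unity_power_eq_one_iff:
  fixes \<zeta> :: "'a::comm_monoid_mult"
  assumes "prime r" "\<zeta> ^ r = 1" "\<zeta> \<noteq> 1"
  shows "\<zeta> ^ k = 1 \<longleftrightarrow> r dvd k"
proof
  assume "\<zeta> ^ k = 1"
  then show "r dvd k"
    using prime_root_of_unity_power_eq_power_power[OF assms(1,2), of k 1] assms(3) by auto
next
  assume "r dvd k"
  then show "\<zeta> ^ k = 1"
    using assms(2) by (auto simp: power_mult)
qed

lemma prime_root_of_unity_quotient_in_int_adjoin:
  assumes "prime r" "\<zeta> ^ r = 1" "\<zeta> \<noteq> 1" "\<not> r dvd k" "\<not> r dvd m"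
  shows "(\<zeta> ^ s * (1 - \<zeta> ^ k)) / (\<zeta> ^ t * (1 - \<zeta> ^ m)) \<in> int_adjoin \<zeta>"
proof -
  define S where "S = (\<Sum>n < m ^ (r - 2) * k. (\<zeta> ^ m) ^ n)"
  define \<zeta>_inv_t where "\<zeta>_inv_t = \<zeta> ^ ((r - 1) * t)"
  have "t + (r - 1) * t = r * t"
    using prime_gt_0_nat[OF assms(1)] by (cases r) auto
  then have \<zeta>_inv_t: "\<zeta> ^ t * \<zeta>_inv_t = 1"
    unfolding \<zeta>_inv_t_def power_add[symmetric] by (simp add: power_mult assms(2))
  have geometric: "1 - \<zeta> ^ k = (1 - \<zeta> ^ m) * S"
    unfolding S_def prime_root_of_unity_power_eq_power_power[OF assms(1,2,5), of k]
    by (rule one_diff_power_eq)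
  have "(\<zeta> ^ s * \<zeta>_inv_t * S) * (\<zeta> ^ t * (1 - \<zeta> ^ m))
      = \<zeta> ^ s * (\<zeta> ^ t * \<zeta>_inv_t) * ((1 - \<zeta> ^ m) * S)"
    by (simp only: ac_simps)
  also have "\<dots> = \<zeta> ^ s * (1 - \<zeta> ^ k)"
    unfolding \<zeta>_inv_t geometric by simp
  finally have product: "(\<zeta> ^ s * \<zeta>_inv_t * S) * (\<zeta> ^ t * (1 - \<zeta> ^ m)) = \<zeta> ^ s * (1 - \<zeta> ^ k)" .
  have "\<zeta> ^ t \<noteq> 0"
    using \<zeta>_inv_t by (metis mult_zero_left zero_neq_one)
  moreover have "\<zeta> ^ m \<noteq> 1"
    using prime_root_of_unity_power_eq_one_iff[OF assms(1-3)] assms(5) by blast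
  ultimately have "\<zeta> ^ t * (1 - \<zeta> ^ m) \<noteq> 0"
    by simp
  then have "(\<zeta> ^ s * (1 - \<zeta> ^ k)) / (\<zeta> ^ t * (1 - \<zeta> ^ m)) = \<zeta> ^ s * \<zeta>_inv_t * S"
    unfolding product[symmetric] by (rule nonzero_mult_div_cancel_right)
  moreover have "\<zeta> ^ s * \<zeta>_inv_t * S \<in> int_adjoin \<zeta>"
    unfolding \<zeta>_inv_t_def S_def
    by (intro int_adjoin_mult int_adjoin_sum int_adjoin_power int_adjoin_self)
  ultimately show ?thesis by simp
qed

lemma A_r_eq_cis: "r > 0 \<Longrightarrow> A_r r = cis (pi / real r)"
  unfolding A_r_def alpha_r_def by (simp add: DeMoivre)

lemma neg_A_r_power_r:
  assumes "odd r"
  shows "(- A_r r) ^ r = 1"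
proof -
  have "r > 0"
    using assms by (rule odd_pos)
  then have "A_r r ^ r = cis (real r * (pi / real r))"
    by (simp add: A_r_eq_cis DeMoivre)
  also have "\<dots> = -1"
    using \<open>r > 0\<close> by simp
  finally show ?thesis
    using assms by (simp add: power_minus[of "A_r r"])
qed

lemma neg_A_r_ne_one:
  assumes "r \<ge> 2"
  shows "- A_r r \<noteq> 1"
proof
  assume "- A_r r = 1"
  then have "A_r r = -1"
    by (metis minus_minus)
  then have "Re (A_r r) = -1"
    by simp
  moreover have "pi / real r \<le> pi / 2"
    using assms by (intro divide_left_mono) auto
  then have "cos (pi / real r) \<ge> 0"
    by (intro cos_ge_zero) (auto intro: order_trans[of _ 0])
  then have "Re (A_r r) \<ge> 0"
    using assms by (simp add: A_r_eq_cis)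
  ultimately show False by simp
qed

lemma assoc_r_neg_A_r_power_mult:
  assumes "prime r" "odd r" "\<not> r dvd k" "\<not> r dvd m"
  shows "assoc_r r ((- A_r r) ^ s * (1 - (- A_r r) ^ k)) ((- A_r r) ^ t * (1 - (- A_r r) ^ m))"
proof -
  let ?\<zeta> = "- A_r r"
  have root: "?\<zeta> ^ r = 1" "?\<zeta> \<noteq> 1"
    using neg_A_r_power_r[OF assms(2)] neg_A_r_ne_one[OF prime_ge_2_nat[OF assms(1)]] by auto
  have "?\<zeta> \<noteq> 0"
    using root(1) prime_gt_0_nat[OF assms(1)] by (metis zero_power zero_neq_one)
  moreover have "1 - ?\<zeta> ^ n \<noteq> 0" if "\<not> r dvd n" for n
    using prime_root_of_unity_power_eq_one_iff[OF assms(1) root] that by simp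
  ultimately have "?\<zeta> ^ s * (1 - ?\<zeta> ^ k) \<noteq> 0" "?\<zeta> ^ t * (1 - ?\<zeta> ^ m) \<noteq> 0"
    using assms(3,4) by simp_all
  moreover have "(?\<zeta> ^ s * (1 - ?\<zeta> ^ k)) / (?\<zeta> ^ t * (1 - ?\<zeta> ^ m)) \<in> O_r r"
    "(?\<zeta> ^ t * (1 - ?\<zeta> ^ m)) / (?\<zeta> ^ s * (1 - ?\<zeta> ^ k)) \<in> O_r r"
    using prime_root_of_unity_quotient_in_int_adjoin[OF assms(1) root] assms(3,4)
      int_adjoin_neg_A_r_subset_O_r by blast+
  ultimately show ?thesis
    unfolding assoc_r_def by blast
qed

lemma mu_r_eq_neg_A_r_power: "mu_r r i = (- A_r r) ^ (i * (i + 2))"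
proof -
  have "(-1::complex) ^ (i * (i + 2)) = (-1) ^ i"
    by (simp add: minus_one_power_iff)
  then show ?thesis
    unfolding mu_r_def by (simp add: power_minus[of "A_r r"])
qed

lemma mu_r_eq_mu_r_mult:
  assumes "i \<le> j"
  shows "mu_r r j = mu_r r i * (- A_r r) ^ ((j - i) * (j + i + 2))"
proof -
  obtain e where "j = i + e"
    using assms le_Suc_ex by blast
  then have "j * (j + 2) = i * (i + 2) + (j - i) * (j + i + 2)"
    by (simp add: algebra_simps)
  then show ?thesis
    unfolding mu_r_eq_neg_A_r_power by (simp add: power_add)
qed

lemma prime_not_dvd_diff_mult_sum:
  fixes r i j :: nat
  assumes "prime r" "i < j" "j \<le> (r - 3) div 2"
  shows "\<not> r dvd (j - i) * (j + i + 2)"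
proof -
  have "0 < j - i" "j - i < r" "0 < j + i + 2" "j + i + 2 < r"
    using assms(2,3) by auto
  then show ?thesis
    by (meson assms(1) prime_dvd_mult_iff nat_dvd_not_less)
qed

theorem lemma7p1:
  fixes r i j :: nat
  assumes "prime r" and "odd r" and "i < j" and "j \<le> (r - 3) div 2"
  shows "assoc_r r ((mu_r r i)^2 - (mu_r r j)^2) (mu_r r i - mu_r r j)
       \<and> assoc_r r (mu_r r i - mu_r r j) (1 - (A_r r)^2)"
proof -
  define \<zeta> where "\<zeta> = - A_r r"
  define a where "a = i * (i + 2)"
  define d where "d = (j - i) * (j + i + 2)"
  have not_dvd_2: "\<not> r dvd 2"
    using assms(1,2) by (metis dvd_imp_le even_numeral le_antisym prime_ge_2_nat zero_less_numeral)
  have not_dvd_d: "\<not> r dvd d"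
    unfolding d_def using assms(1,3,4) by (rule prime_not_dvd_diff_mult_sum)
  then have not_dvd_2d: "\<not> r dvd 2 * d"
    using assms(1) not_dvd_2 by (simp add: prime_dvd_mult_iff)
  have mu_i: "mu_r r i = \<zeta> ^ a"
    unfolding \<zeta>_def a_def by (rule mu_r_eq_neg_A_r_power)
  have mu_j: "mu_r r j = \<zeta> ^ a * \<zeta> ^ d"
    unfolding mu_r_eq_mu_r_mult[OF less_imp_le[OF assms(3)]] mu_i \<zeta>_def d_def ..
  have diff_sq: "(mu_r r i)^2 - (mu_r r j)^2 = \<zeta> ^ (2 * a) * (1 - \<zeta> ^ (2 * d))"
    unfolding mu_i mu_j power_even_eq by (simp add: power_mult_distrib right_diff_distrib)
  have diff: "mu_r r i - mu_r r j = \<zeta> ^ a * (1 - \<zeta> ^ d)"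
    unfolding mu_i mu_j by (simp add: right_diff_distrib)
  have one_minus_A_sq: "1 - (A_r r)^2 = \<zeta> ^ 0 * (1 - \<zeta> ^ 2)"
    unfolding \<zeta>_def by simp
  show ?thesis
    unfolding diff_sq diff one_minus_A_sq \<zeta>_def
    using assoc_r_neg_A_r_power_mult[OF assms(1,2) not_dvd_2d not_dvd_d]
      assoc_r_neg_A_r_power_mult[OF assms(1,2) not_dvd_d not_dvd_2]
    by (rule conjI)
qed

end
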